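(* Let $n \ge 3$ and let $S \subseteq \{1,\dots,n\}$ with $|S| = 3$. Then there exist $u \in \mathbb{R}^4$, $W \in \mathbb{R}^{4 \times n}$ and $b \in \mathbb{R}^4$ such that the network $f(x) = u^\intercal \sigma(Wx + b)$ satisfies, for every $x \in \{\pm 1\}^n$, $f(x) > 0$ if $\prod_{i \in S} x_i = 1$ and $f(x) < 0$ if $\prod_{i \in S} x_i = -1$.
   Context: Here $\sigma$ is the ReLU function $\sigma(z) = \max(0,z)$, applied componentwise. A 1-layer ReLU net with $p$ hidden neurons is a function $f(x) = u^\intercal \sigma(Wx+b)$ with $u \in \mathbb{R}^p$, $W \in \mathbb{R}^{p\times n}$, $b \in \mathbb{R}^p$; it computes the $(n,3)$-parity with hidden index set $S$ if its output is positive exactly when $\prod_{i\in S} x_i = 1$ and negative otherwise. *)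

theory Defs
  imports "HOL-Analysis.Analysis"
begin

definition relu :: "real \<Rightarrow> real" where
  "relu z = max 0 z"

definition relu_net :: "nat \<Rightarrow> nat \<Rightarrow> (nat \<Rightarrow> real) \<Rightarrow> (nat \<Rightarrow> nat \<Rightarrow> real) \<Rightarrow> (nat \<Rightarrow> real)
    \<Rightarrow> (nat \<Rightarrow> real) \<Rightarrow> real" where
  "relu_net n p u W b x = (\<Sum>j<p. u j * relu ((\<Sum>i=1..n. W j i * x i) + b j))"

end

(*
  All four hidden neurons receive the same pre-activation s = (\<Sum>i\<in>S. x i). For x \<in> {\<plusminus>1}^n,
  if k of the three coordinates in S equal -1, then s = 3 - 2k and the parity is (-1)^k. So it
  suffices to find one piecewise linear function of s, built from four ReLUs, that takes the
  values -1, 1, -1, 1 at s = -3, -1, 1, 3; then the network computes the parity exactly.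
*)
theory Submission
  imports Defs
begin

lemma sign_vector_sum_prod:
  fixes x :: "'a \<Rightarrow> real"
  assumes "finite S" and "\<forall>i\<in>S. x i = 1 \<or> x i = -1"
  shows "\<exists>k\<le>card S. sum x S = real (card S) - 2 * real k \<and> prod x S = (-1) ^ k"
  using assms
proof (induction S rule: finite_induct)
  case empty
  then show ?case by simp
next
  case (insert a S)
  then obtain k where k: "k \<le> card S" "sum x S = real (card S) - 2 * real k" "prod x S = (-1) ^ k"
    by auto
  from insert.prems consider "x a = 1" | "x a = -1" by auto
  then show ?case
  proof cases
    case 1
    with k insert.hyps show ?thesis by (intro exI[of _ k]) auto
  next
    case 2
    with k insert.hyps show ?thesis by (intro exI[of _ "Suc k"]) auto
  qed
qed

lemma relu_net_indicator_rows:
  assumes "S \<subseteq> {1..n}"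
  shows "relu_net n p u (\<lambda>j. indicator S) b x = (\<Sum>j<p. u j * relu (sum x S + b j))"
proof -
  have "(\<Sum>i=1..n. indicator S i * x i) = sum x ({1..n} \<inter> S)"
    by (simp add: sum.inter_restrict indicator_times_eq_if)
  also have "{1..n} \<inter> S = S"
    using assms by blast
  finally show ?thesis by (simp add: relu_net_def)
qed

(* The breakpoints of the four neurons lie at s = -4, -2, 0, 2, one to the left of each point 3 - 2k. *)
lemma parity3_profile:
  fixes k :: nat
  assumes "k \<le> 3"
  shows "(\<Sum>j<4. [-1, 4, -8, 12] ! j * relu (3 - 2 * real k + [4, 2, 0, -2] ! j)) = (-1) ^ k"
proof -
  have "k \<in> {0, 1, 2, 3}"
    using assms by auto
  then show ?thesis
    by (auto simp: relu_def eval_nat_numeral lessThan_Suc)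
qed

lemma relu_net_eq_parity3:
  assumes "S \<subseteq> {1..n}" and "card S = 3" and "\<forall>i\<in>{1..n}. x i = 1 \<or> x i = -1"
  shows "relu_net n 4 (\<lambda>j. [-1, 4, -8, 12] ! j) (\<lambda>j. indicator S) (\<lambda>j. [4, 2, 0, -2] ! j) x
           = (\<Prod>i\<in>S. x i)"
proof -
  have "finite S"
    using assms(2) by (intro card_ge_0_finite) simp
  moreover have "\<forall>i\<in>S. x i = 1 \<or> x i = -1"
    using assms(1,3) by blast
  ultimately obtain k where "k \<le> card S" "sum x S = real (card S) - 2 * real k" "prod x S = (-1) ^ k"
    by (blast dest: sign_vector_sum_prod)
  then show ?thesis
    unfolding relu_net_indicator_rows[OF assms(1)] assms(2) by (simp only: of_nat_numeral parity3_profile)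
qed

theorem proposition3:
  fixes n :: nat and S :: "nat set"
  assumes "n \<ge> 3" and "S \<subseteq> {1..n}" and "card S = 3"
  shows "\<exists>(u :: nat \<Rightarrow> real) (W :: nat \<Rightarrow> nat \<Rightarrow> real) (b :: nat \<Rightarrow> real).
           \<forall>x :: nat \<Rightarrow> real. (\<forall>i\<in>{1..n}. x i = 1 \<or> x i = -1) \<longrightarrow>
             ((\<Prod>i\<in>S. x i) = 1 \<longrightarrow> relu_net n 4 u W b x > 0) \<and>
             ((\<Prod>i\<in>S. x i) = -1 \<longrightarrow> relu_net n 4 u W b x < 0)"
proof (intro exI allI impI conjI)
  fix x :: "nat \<Rightarrow> real"
  assume "\<forall>i\<in>{1..n}. x i = 1 \<or> x i = -1"
  note net = relu_net_eq_parity3[OF assms(2,3) this]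
  show "relu_net n 4 (\<lambda>j. [-1, 4, -8, 12] ! j) (\<lambda>j. indicator S) (\<lambda>j. [4, 2, 0, -2] ! j) x > 0"
    if "(\<Prod>i\<in>S. x i) = 1"
    using net that by simp
  show "relu_net n 4 (\<lambda>j. [-1, 4, -8, 12] ! j) (\<lambda>j. indicator S) (\<lambda>j. [4, 2, 0, -2] ! j) x < 0"
    if "(\<Prod>i\<in>S. x i) = -1"
    using net that by simp
qed

end
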